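(* Let $\mathfrak{C}\in\{c,B\}$. (a) There is a family of size $2^{\aleph_0}$ of pairs $(X,A)$, $X$ Polish and $A$ a $\Sigma^0_2$ digraph on $X$ of uncountable Borel chromatic number, which is a $\preceq^{inj}_{\mathfrak{C}}$-antichain (pairwise incomparable). (b) There is a sequence $(X_n,A_n)_{n\in\omega}$ of such pairs ($\Sigma^0_2$ digraphs on Polish spaces of uncountable Borel chromatic number) with $(X_n,A_n)\preceq^{inj}_{\mathfrak{C}}(X_{n+1},A_{n+1})$ and $(X_{n+1},A_{n+1})\not\preceq^{inj}_{\mathfrak{C}}(X_n,A_n)$ for every $n$.
   Context: A digraph on $X$ is a relation $A\subseteq X^2$ disjoint from the diagonal. For relations $A$ on $X$, $B$ on $Y$ (Polish), $(X,A)\preceq^{inj}_c(Y,B)$ (resp. $\preceq^{inj}_B$) means there is an injective continuous (resp. Borel) $h:X\to Y$ with $A\subseteq(h\times h)^{-1}(B)$. The Borel chromatic number of a digraph $A$ on Polish $X$ is the least cardinality of a Polish $Y$ admitting a Borel $c:X\to Y$ with $c(x)\neq c(x')$ for $(x,x')\in A$. *)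

theory Defs
  imports "HOL-Analysis.Analysis"
begin

definition Polish_space :: "'a topology \<Rightarrow> bool" where
  "Polish_space X \<longleftrightarrow> completely_metrizable_space X \<and> separable_space X"

definition borel_sets_in :: "'a topology \<Rightarrow> 'a set set" where
  "borel_sets_in X = sigma_sets (topspace X) {U. openin X U}"

definition borel_map :: "'a topology \<Rightarrow> 'b topology \<Rightarrow> ('a \<Rightarrow> 'b) \<Rightarrow> bool" where
  "borel_map X Y h \<longleftrightarrow> h ` topspace X \<subseteq> topspace Y \<and>
     (\<forall>B \<in> borel_sets_in Y. {x \<in> topspace X. h x \<in> B} \<in> borel_sets_in X)"

definition digraph_on :: "'a topology \<Rightarrow> ('a \<times> 'a) set \<Rightarrow> bool" where
  "digraph_on X A \<longleftrightarrow> A \<subseteq> topspace X \<times> topspace X \<and> (\<forall>x. (x, x) \<notin> A)"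

text \<open>Uncountable Borel chromatic number: no countable Polish space Y admits a Borel
  colouring. Countable spaces are represented (up to homeomorphism) on carriers in nat.\<close>
definition uncountable_borel_chromatic :: "'a topology \<Rightarrow> ('a \<times> 'a) set \<Rightarrow> bool" where
  "uncountable_borel_chromatic X A \<longleftrightarrow>
     \<not> (\<exists>(Y :: nat topology) c. Polish_space Y \<and> borel_map X Y c \<and>
            (\<forall>(x, x') \<in> A. c x \<noteq> c x'))"

datatype reduction_kind = Cont | Bor

definition inj_reducible ::
  "reduction_kind \<Rightarrow> 'a topology \<Rightarrow> ('a \<times> 'a) set \<Rightarrow> 'b topology \<Rightarrow> ('b \<times> 'b) set \<Rightarrow> bool" where
  "inj_reducible k X A Y B \<longleftrightarrow>
     (\<exists>h. (case k of Cont \<Rightarrow> continuous_map X Y h | Bor \<Rightarrow> borel_map X Y h) \<and>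
          inj_on h (topspace X) \<and> (\<forall>(x, x') \<in> A. (h x, h x') \<in> B))"

definition good_pair :: "'a topology \<Rightarrow> ('a \<times> 'a) set \<Rightarrow> bool" where
  "good_pair X A \<longleftrightarrow> Polish_space X \<and> digraph_on X A \<and>
     fsigma_in (prod_topology X X) A \<and> uncountable_borel_chromatic X A"

end

theory Submission
  imports Defs
begin

text \<open>For \<open>S \<subseteq> {3..}\<close> take on \<open>\<real>\<close> the strict order \<open>x < y\<close> together with the backward edges
  of disjoint cycles, one of each length \<open>m \<in> S\<close>, placed on integer points. Every colouring of the
  order is injective, so the Borel chromatic number is uncountable, and the digraph is the union
  of an open and a countable set, hence \<open>\<Sigma>\<^sup>0\<^sub>2\<close>. The pairs joined in both directions are exactly the
  cycle edges, so an injective homomorphism maps each \<open>k\<close>-cycle injectively into the other cycles,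
  which is only possible onto a cycle of the same length. Hence the digraph of \<open>S\<close> reduces to
  that of \<open>S'\<close> iff \<open>S \<subseteq> S'\<close>, and the theorem follows from an antichain of size continuum and a
  strictly increasing chain of subsets of \<open>{3..}\<close>.\<close>

definition cycle_adj :: "nat \<Rightarrow> nat \<Rightarrow> nat \<Rightarrow> bool" where
  "cycle_adj m i i' \<longleftrightarrow> i' = Suc i mod m \<or> i = Suc i' mod m"

lemma Suc_mod_inj:
  fixes i i' m :: nat
  assumes "i < m" "i' < m" "Suc i mod m = Suc i' mod m"
  shows "i = i'"
  using assms by (metis Suc_lessI mod_less mod_self nat.distinct(1) nat.inject)

lemma Suc_mod_neq_pred_mod:
  fixes j k :: nat
  assumes "3 \<le> k"
  shows "Suc j mod k \<noteq> (j + k - 1) mod k"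
proof
  assume "Suc j mod k = (j + k - 1) mod k"
  moreover have "j + k - 1 = Suc j + (k - 2)" using assms by simp
  ultimately have "k dvd k - 2"
    by (metis add_diff_cancel_left' le_add1 mod_eq_dvd_iff_nat)
  moreover have "0 < k - 2" "k - 2 < k" using assms by simp_all
  ultimately show False using nat_dvd_not_less by blast
qed

text \<open>A closed walk of length \<open>k \<ge> 3\<close> that is injective modulo \<open>k\<close> on the \<open>m\<close>-cycle is a
  Hamiltonian cycle: the two walk-neighbours of a visited vertex are distinct neighbours of it on
  the cycle, so the successor of every visited vertex is visited as well.\<close>

lemma closed_walk_on_cycle_length:
  fixes f :: "nat \<Rightarrow> nat"
  assumes k: "3 \<le> k"
    and below: "\<And>j. f j < m"
    and same: "\<And>a b. f a = f b \<longleftrightarrow> a mod k = b mod k"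
    and adj: "\<And>j. cycle_adj m (f j) (f (Suc j))"
  shows "k = m"
proof (rule antisym)
  have "inj_on f {..<k}"
    by (rule inj_onI) (simp add: same)
  then have "card {..<k} \<le> card {..<m}"
    by (rule card_inj_on_le) (auto simp: below)
  then show "k \<le> m" by simp
next
  have range_eq: "range f = f ` {..<k}"
  proof (intro equalityI subsetI)
    fix x assume "x \<in> range f"
    then obtain j where "x = f j" by blast
    moreover have "f j = f (j mod k)" using same by simp
    ultimately show "x \<in> f ` {..<k}" using k by simp
  qed auto
  have succ_visited: "Suc i mod m \<in> range f" if "i \<in> range f" for i
  proof -
    from that obtain j where i: "i = f j" by blast
    let ?a = "f (Suc j)" and ?b = "f (j + k - 1)"
    have "?a \<noteq> ?b" using Suc_mod_neq_pred_mod[OF k, of j] by (simp add: same)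
    have "f (Suc (j + k - 1)) = f j" using same k by simp
    then have "cycle_adj m i ?a" "cycle_adj m i ?b"
      using adj[of j] adj[of "j + k - 1"] i unfolding cycle_adj_def by auto
    with \<open>?a \<noteq> ?b\<close> have "?a = Suc i mod m \<or> ?b = Suc i mod m"
      unfolding cycle_adj_def using Suc_mod_inj below by metis
    then show ?thesis by (metis rangeI)
  qed
  have shifted: "(f 0 + t) mod m \<in> range f" for t
  proof (induction t)
    case 0 then show ?case using below[of 0] by simp
  next
    case (Suc t)
    then show ?case using succ_visited[OF Suc.IH] by (simp add: mod_Suc_eq)
  qed
  have "{..<m} \<subseteq> range f"
  proof
    fix i assume "i \<in> {..<m}"
    then have "i = (f 0 + (i + m - f 0)) mod m" using below[of 0] by simp
    then show "i \<in> range f" by (metis shifted)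
  qed
  then have "card {..<m} \<le> card (f ` {..<k})" unfolding range_eq by (intro card_mono) simp_all
  also have "\<dots> \<le> k" using card_image_le by fastforce
  finally show "m \<le> k" by simp
qed

text \<open>The \<open>m\<close>-cycle occupies the integers \<open>m\<^sup>2, \<dots>, m\<^sup>2 + m - 1\<close>; these blocks are disjoint
  because \<open>m\<^sup>2 + m < (m + 1)\<^sup>2\<close>.\<close>

definition cycle_vertex :: "nat \<Rightarrow> nat \<Rightarrow> real" where
  "cycle_vertex m j = real (m * m + j)"

definition cycle_graph :: "nat set \<Rightarrow> (real \<times> real) set" where
  "cycle_graph S = {(cycle_vertex m i, cycle_vertex m i') | m i i'.
     m \<in> S \<and> i < m \<and> i' < m \<and> cycle_adj m i i'}"

definition cycle_digraph :: "nat set \<Rightarrow> (real \<times> real) set" where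
  "cycle_digraph S = {(x, y). x < y} \<union> {(x, y) \<in> cycle_graph S. y < x}"

lemma cycle_vertex_inj:
  assumes "j < m" "j' < m'" "cycle_vertex m j = cycle_vertex m' j'"
  shows "m = m' \<and> j = j'"
proof -
  have block: "\<not> m < m'" if "j < m" "m * m + j = m' * m' + j'" for m m' j j' :: nat
  proof
    assume "m < m'"
    then have "Suc m * Suc m \<le> m' * m'" using mult_le_mono Suc_leI by blast
    then show False using that by simp
  qed
  have "m * m + j = m' * m' + j'" using assms(3) unfolding cycle_vertex_def by linarith
  then have "m = m'" using block assms(1,2) by (metis linorder_neqE_nat)
  with \<open>m * m + j = m' * m' + j'\<close> show ?thesis by simp
qed

lemma cycle_graph_mono: "S \<subseteq> S' \<Longrightarrow> cycle_graph S \<subseteq> cycle_graph S'"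
  unfolding cycle_graph_def by (intro Collect_mono) blast

lemma cycle_digraph_mono: "S \<subseteq> S' \<Longrightarrow> cycle_digraph S \<subseteq> cycle_digraph S'"
  unfolding cycle_digraph_def using cycle_graph_mono by blast

lemma cycle_graph_sym: "(x, y) \<in> cycle_graph S \<Longrightarrow> (y, x) \<in> cycle_graph S"
  unfolding cycle_graph_def cycle_adj_def by blast

lemma cycle_graph_edgeI:
  assumes "m \<in> S" "0 < m"
  shows "(cycle_vertex m (j mod m), cycle_vertex m (Suc j mod m)) \<in> cycle_graph S"
  unfolding cycle_graph_def cycle_adj_def
  by (intro CollectI exI[of _ m] exI[of _ "j mod m"] exI[of _ "Suc j mod m"])
    (simp add: assms mod_Suc_eq)

lemma cycle_graph_edgeE:
  assumes "(x, y) \<in> cycle_graph S"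
  obtains m i i' where "m \<in> S" "i < m" "i' < m" "cycle_adj m i i'"
    "x = cycle_vertex m i" "y = cycle_vertex m i'"
  using assms unfolding cycle_graph_def by blast

lemma cycle_graph_edge_from_vertex:
  assumes "(cycle_vertex m i, y) \<in> cycle_graph S" "i < m"
  obtains i' where "i' < m" "cycle_adj m i i'" "y = cycle_vertex m i'"
  using assms(1) by (rule cycle_graph_edgeE) (metis assms(2) cycle_vertex_inj)

lemma cycle_graph_irrefl:
  assumes "S \<subseteq> {3..}"
  shows "(x, x) \<notin> cycle_graph S"
proof
  assume "(x, x) \<in> cycle_graph S"
  then obtain m i i' where "m \<in> S" "i < m" "i' < m" "cycle_adj m i i'"
    and "cycle_vertex m i = cycle_vertex m i'"
    by (rule cycle_graph_edgeE) simp
  moreover from this have "i' = i" using cycle_vertex_inj by blast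
  moreover have "3 \<le> m" using \<open>m \<in> S\<close> assms by auto
  ultimately have "Suc i mod m = i" "3 \<le> m" "i < m" unfolding cycle_adj_def by auto
  then show False by (cases "Suc i = m") auto
qed

lemma countable_cycle_graph: "countable (cycle_graph S)"
proof (rule countable_subset)
  show "cycle_graph S \<subseteq> (\<lambda>(a, b). (real a, real b)) ` (UNIV :: (nat \<times> nat) set)"
  proof clarify
    fix x y assume "(x, y) \<in> cycle_graph S"
    then obtain m i i' where "x = cycle_vertex m i" "y = cycle_vertex m i'"
      by (rule cycle_graph_edgeE)
    then show "(x, y) \<in> (\<lambda>(a, b). (real a, real b)) ` UNIV"
      unfolding cycle_vertex_def by (intro image_eqI[of _ _ "(m * m + i, m * m + i')"]) simp_all
  qed
qed simp

lemma cycle_graph_hom_rigid: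
  assumes inj: "inj h"
    and hom: "\<And>x y. (x, y) \<in> cycle_graph S \<Longrightarrow> (h x, h y) \<in> cycle_graph S'"
    and k: "k \<in> S" "3 \<le> k"
  shows "k \<in> S'"
proof -
  define g where "g j = h (cycle_vertex k (j mod k))" for j
  have step: "(g j, g (Suc j)) \<in> cycle_graph S'" for j
    using k unfolding g_def by (intro hom cycle_graph_edgeI) simp_all
  have g_eq: "g a = g b \<longleftrightarrow> a mod k = b mod k" for a b
  proof
    assume "g a = g b"
    then have "cycle_vertex k (a mod k) = cycle_vertex k (b mod k)"
      unfolding g_def using inj by (simp add: inj_eq)
    moreover have "a mod k < k" "b mod k < k" using k(2) by simp_all
    ultimately show "a mod k = b mod k" using cycle_vertex_inj by blast
  qed (simp add: g_def)
  obtain m i0 where m: "m \<in> S'" "i0 < m" "g 0 = cycle_vertex m i0"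
    using step[of 0] by (rule cycle_graph_edgeE) blast
  have in_block: "\<forall>j. \<exists>i. i < m \<and> g j = cycle_vertex m i"
  proof
    fix j show "\<exists>i. i < m \<and> g j = cycle_vertex m i"
    proof (induction j)
      case 0 then show ?case using m by blast
    next
      case (Suc j)
      then obtain i where "i < m" "g j = cycle_vertex m i" by blast
      with step[of j] obtain i' where "i' < m" "g (Suc j) = cycle_vertex m i'"
        by (auto elim: cycle_graph_edge_from_vertex)
      then show ?case by blast
    qed
  qed
  obtain f where f: "\<And>j. f j < m" "\<And>j. g j = cycle_vertex m (f j)"
    using choice[OF in_block] by blast
  have f_eq: "f a = f b \<longleftrightarrow> g a = g b" for a b
    using f cycle_vertex_inj by metis
  have "k = m"
  proof (rule closed_walk_on_cycle_length[OF k(2) f(1)])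
    show "f a = f b \<longleftrightarrow> a mod k = b mod k" for a b
      using f_eq g_eq by simp
    show "cycle_adj m (f j) (f (Suc j))" for j
    proof -
      obtain i' where "i' < m" "cycle_adj m (f j) i'" "g (Suc j) = cycle_vertex m i'"
        using step[of j] f by (auto elim: cycle_graph_edge_from_vertex)
      then show ?thesis using f_eq f by (metis cycle_vertex_inj)
    qed
  qed
  then show ?thesis using m by simp
qed

lemma cycle_digraph_two_way:
  "(x, y) \<in> cycle_digraph S \<and> (y, x) \<in> cycle_digraph S \<longleftrightarrow> (x, y) \<in> cycle_graph S \<and> x \<noteq> y"
  using cycle_graph_sym unfolding cycle_digraph_def by (cases x y rule: linorder_cases) auto

lemma inj_reducible_cycle_digraph_imp_subset:
  assumes "S \<subseteq> {3..}"
    and "inj_reducible r euclidean (cycle_digraph S) euclidean (cycle_digraph S')"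
  shows "S \<subseteq> S'"
proof
  fix k assume "k \<in> S"
  from assms(2) obtain h :: "real \<Rightarrow> real" where
    "inj h" and hom: "\<And>x y. (x, y) \<in> cycle_digraph S \<Longrightarrow> (h x, h y) \<in> cycle_digraph S'"
    unfolding inj_reducible_def by auto
  have graph_hom: "(h x, h y) \<in> cycle_graph S'" if "(x, y) \<in> cycle_graph S" for x y
  proof -
    have "x \<noteq> y" using that cycle_graph_irrefl[OF assms(1)] by blast
    with that have "(x, y) \<in> cycle_digraph S \<and> (y, x) \<in> cycle_digraph S"
      by (simp add: cycle_digraph_two_way)
    then have "(h x, h y) \<in> cycle_digraph S' \<and> (h y, h x) \<in> cycle_digraph S'"
      using hom by blast
    then show ?thesis by (simp add: cycle_digraph_two_way)
  qed
  have "3 \<le> k" using \<open>k \<in> S\<close> assms(1) by auto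
  show "k \<in> S'" using cycle_graph_hom_rigid[OF \<open>inj h\<close> graph_hom \<open>k \<in> S\<close> \<open>3 \<le> k\<close>] .
qed

lemma borel_map_id: "borel_map X X id"
  unfolding borel_map_def borel_sets_in_def
proof (intro conjI ballI)
  fix B assume B: "B \<in> sigma_sets (topspace X) {U. openin X U}"
  have "B \<subseteq> topspace X"
    using sigma_sets_into_sp[OF _ B] openin_subset by blast
  then have "{x \<in> topspace X. id x \<in> B} = B" by auto
  then show "{x \<in> topspace X. id x \<in> B} \<in> sigma_sets (topspace X) {U. openin X U}"
    using B by simp
qed simp

lemma inj_reducible_id:
  assumes "A \<subseteq> B"
  shows "inj_reducible r X A X B"
  unfolding inj_reducible_def
  by (rule exI[of _ id]) (use assms in \<open>auto simp: borel_map_id split: reduction_kind.split\<close>)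

lemma inj_reducible_cycle_digraph_iff:
  assumes "S \<subseteq> {3..}"
  shows "inj_reducible r euclidean (cycle_digraph S) euclidean (cycle_digraph S') \<longleftrightarrow> S \<subseteq> S'"
  using inj_reducible_cycle_digraph_imp_subset[OF assms] inj_reducible_id cycle_digraph_mono
  by blast

lemma Polish_space_real: "Polish_space (euclidean :: real topology)"
  unfolding Polish_space_def separable_space_def
  by (auto intro!: exI[of _ "\<rat>"] simp: completely_metrizable_space_euclidean
      Rats_closure_real countable_rat)

lemma fsigma_in_countable:
  fixes R :: "'a::t1_space set"
  assumes "countable R"
  shows "fsigma_in euclidean R"
proof -
  have "fsigma_in euclidean (\<Union>z\<in>R. {z})"
    using assms by (intro fsigma_in_Union) (auto intro: closed_imp_fsigma_in)
  then show ?thesis by simp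
qed

lemma fsigma_in_less: "fsigma_in euclidean {(x :: real, y). x < y}"
proof -
  have "open {p :: real \<times> real. fst p < snd p}"
    by (intro open_Collect_less continuous_intros)
  moreover have "{(x :: real, y). x < y} = {p. fst p < snd p}" by auto
  ultimately show ?thesis
    using open_imp_fsigma_in[OF metrizable_space_euclidean] open_openin by metis
qed

lemma uncountable_borel_chromatic_of_less:
  assumes "{(x, y). x < y} \<subseteq> A"
  shows "uncountable_borel_chromatic (euclidean :: real topology) A"
  unfolding uncountable_borel_chromatic_def
proof (clarify)
  fix Y :: "nat topology" and c :: "real \<Rightarrow> nat"
  assume colouring: "\<forall>(x, x') \<in> A. c x \<noteq> c x'"
  have "inj c"
  proof (rule injI, rule ccontr)
    fix x y assume "c x = c y" "x \<noteq> y"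
    then have "(x, y) \<in> A \<or> (y, x) \<in> A" using assms by (cases x y rule: linorder_cases) auto
    then show False using colouring \<open>c x = c y\<close> by auto
  qed
  then have "countable (UNIV :: real set)" by (rule countableI)
  then show False using uncountable_UNIV_real by blast
qed

lemma good_pair_cycle_digraph: "good_pair euclidean (cycle_digraph S)"
  unfolding good_pair_def
proof (intro conjI)
  show "digraph_on euclidean (cycle_digraph S)"
    unfolding digraph_on_def cycle_digraph_def by simp
  have "countable {(x, y) \<in> cycle_graph S. y < x}"
    by (rule countable_subset[OF _ countable_cycle_graph]) blast
  then have "fsigma_in euclidean ({(x :: real, y). x < y} \<union> {(x, y) \<in> cycle_graph S. y < x})"
    by (intro fsigma_in_Un fsigma_in_less fsigma_in_countable)
  then show "fsigma_in (prod_topology euclidean euclidean) (cycle_digraph S)"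
    unfolding prod_topology_euclidean cycle_digraph_def .
  show "uncountable_borel_chromatic euclidean (cycle_digraph S)"
    by (rule uncountable_borel_chromatic_of_less) (unfold cycle_digraph_def, blast)
qed (rule Polish_space_real)

text \<open>Odd codes record the rationals below \<open>r\<close> and even codes the others, so a rational strictly
  between \<open>r\<close> and \<open>r'\<close> separates the two codes in both directions.\<close>

definition cut_code :: "real \<Rightarrow> nat set" where
  "cut_code r = {2 * to_nat q + 3 | q :: rat. of_rat q < r} \<union> {2 * to_nat q + 4 | q :: rat. r \<le> of_rat q}"

lemma cut_code_ge_3: "cut_code r \<subseteq> {3..}"
  unfolding cut_code_def by auto

lemma cut_code_odd: "2 * to_nat q + 3 \<in> cut_code r \<longleftrightarrow> of_rat q < r"
proof
  assume "2 * to_nat q + 3 \<in> cut_code r"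
  then obtain q' :: rat where "to_nat q' = to_nat q" "of_rat q' < r"
    unfolding cut_code_def by auto presburger
  then show "of_rat q < r" by (metis inj_to_nat injD)
qed (unfold cut_code_def, blast)

lemma cut_code_even: "2 * to_nat q + 4 \<in> cut_code r \<longleftrightarrow> r \<le> of_rat q"
proof
  assume "2 * to_nat q + 4 \<in> cut_code r"
  then obtain q' :: rat where "to_nat q' = to_nat q" "r \<le> of_rat q'"
    unfolding cut_code_def by auto presburger
  then show "r \<le> of_rat q" by (metis inj_to_nat injD)
qed (unfold cut_code_def, blast)

lemma cut_code_not_subset:
  assumes "r \<noteq> r'"
  shows "\<not> cut_code r \<subseteq> cut_code r'"
proof (cases "r < r'")
  case True
  then obtain q :: rat where "r < of_rat q" "of_rat q < r'" using of_rat_dense by blast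
  then have "2 * to_nat q + 4 \<in> cut_code r - cut_code r'" using cut_code_even[of q] by simp
  then show ?thesis by blast
next
  case False
  with assms obtain q :: rat where "r' < of_rat q" "of_rat q < r"
    using of_rat_dense[of r' r] by fastforce
  then have "2 * to_nat q + 3 \<in> cut_code r - cut_code r'" using cut_code_odd[of q] by simp
  then show ?thesis by blast
qed

theorem theorem1p4:
  fixes k :: reduction_kind
  shows "(\<exists>F :: real \<Rightarrow> real topology \<times> (real \<times> real) set.
            (\<forall>i. good_pair (fst (F i)) (snd (F i))) \<and>
            (\<forall>i j. i \<noteq> j \<longrightarrow>
               \<not> inj_reducible k (fst (F i)) (snd (F i)) (fst (F j)) (snd (F j))))
       \<and> (\<exists>S :: nat \<Rightarrow> real topology \<times> (real \<times> real) set.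
            (\<forall>n. good_pair (fst (S n)) (snd (S n))) \<and>
            (\<forall>n. inj_reducible k (fst (S n)) (snd (S n)) (fst (S (Suc n))) (snd (S (Suc n))) \<and>
                 \<not> inj_reducible k (fst (S (Suc n))) (snd (S (Suc n))) (fst (S n)) (snd (S n))))"
proof (intro conjI)
  show "\<exists>F :: real \<Rightarrow> real topology \<times> (real \<times> real) set.
          (\<forall>i. good_pair (fst (F i)) (snd (F i))) \<and>
          (\<forall>i j. i \<noteq> j \<longrightarrow> \<not> inj_reducible k (fst (F i)) (snd (F i)) (fst (F j)) (snd (F j)))"
    by (intro exI[of _ "\<lambda>r. (euclidean, cycle_digraph (cut_code r))"])
      (simp add: good_pair_cycle_digraph inj_reducible_cycle_digraph_iff cut_code_ge_3
        cut_code_not_subset)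
  show "\<exists>S :: nat \<Rightarrow> real topology \<times> (real \<times> real) set.
          (\<forall>n. good_pair (fst (S n)) (snd (S n))) \<and>
          (\<forall>n. inj_reducible k (fst (S n)) (snd (S n)) (fst (S (Suc n))) (snd (S (Suc n))) \<and>
               \<not> inj_reducible k (fst (S (Suc n))) (snd (S (Suc n))) (fst (S n)) (snd (S n)))"
    by (intro exI[of _ "\<lambda>n. (euclidean, cycle_digraph {3..n + 3})"])
      (simp add: good_pair_cycle_digraph inj_reducible_cycle_digraph_iff)
qed

end
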